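(* Let $u, v_1, \ldots, v_n \in \mathcal{L}_s$. Then $u \leqslant_{\mathcal{L}} \max(v_1, \ldots, v_n)$ if and only if there exists $i$ such that $u \leqslant_{\mathcal{L}} v_i$.
   Context: $\mathcal{X}$ is a countable set of variables; a valuation is $\sigma\colon\mathcal{X}\to\mathbb{N}$. For finite $E\subseteq\mathcal{X}$, $x\in\mathcal{X}$, $S\in\mathbb{N}$, the sublevels $A(E,x,S)$ and $B(E,S)$ have values $[A(E,x,S)]_\sigma = 0$ if some $y\in E$ has $\sigma(y)=0$, and $\sigma(x)+S$ otherwise; $[B(E,S)]_\sigma=0$ if some $y\in E$ has $\sigma(y)=0$, and $S$ otherwise. $\mathcal{L}_s$ is the set of sublevels $A(E,x,S)$ with $x\in E$ and $B(E,S)$ with $S>0$. $\max$ of a finite family is evaluated pointwise (empty max has value $0$). $t_1\leqslant_{\mathcal{L}} t_2$ means $[t_1]_\sigma\le[t_2]_\sigma$ for every valuation $\sigma$. *)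

theory Defs
  imports Main "HOL-Library.Countable"
begin

text \<open>Sublevels over a countable set of variables 'x. Finite sets E are represented
  by 'x set together with a finiteness requirement in the membership predicate in_Ls.\<close>

datatype 'x sublevel = SubA "'x set" 'x nat | SubB "'x set" nat

fun sval :: "('x \<Rightarrow> nat) \<Rightarrow> 'x sublevel \<Rightarrow> nat" where
  "sval \<sigma> (SubA E x S) = (if \<exists>y\<in>E. \<sigma> y = 0 then 0 else \<sigma> x + S)"
| "sval \<sigma> (SubB E S) = (if \<exists>y\<in>E. \<sigma> y = 0 then 0 else S)"

fun in_Ls :: "'x sublevel \<Rightarrow> bool" where
  "in_Ls (SubA E x S) \<longleftrightarrow> finite E \<and> x \<in> E"
| "in_Ls (SubB E S) \<longleftrightarrow> finite E \<and> S > 0"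

definition max_val :: "('x \<Rightarrow> nat) \<Rightarrow> 'x sublevel list \<Rightarrow> nat" where
  "max_val \<sigma> vs = fold max (map (sval \<sigma>) vs) 0"

definition le_L_max :: "'x sublevel \<Rightarrow> 'x sublevel list \<Rightarrow> bool" where
  "le_L_max u vs \<longleftrightarrow> (\<forall>\<sigma>. sval \<sigma> u \<le> max_val \<sigma> vs)"

definition le_L :: "'x sublevel \<Rightarrow> 'x sublevel \<Rightarrow> bool" where
  "le_L t1 t2 \<longleftrightarrow> (\<forall>\<sigma>. sval \<sigma> t1 \<le> sval \<sigma> t2)"

end

theory Submission
  imports Defs
begin

text \<open>Test u against one valuation: 1 on its guard set E and 0 elsewhere, except that for
  u = A(E,x,S) the variable x gets a value N exceeding every parameter of the v_i by at least 2.
  Then u is positive there, so some v_i attains the maximum and reaches the value of u. Positivity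
  of v_i forces its guard into E; for u = A(E,x,S) the size of N forces v_i = A(F,x,T) with S \<le> T,
  and for u = B(E,S) the variable of an A-sublevel contributes at least 1 wherever E is nonzero.\<close>

lemma max_val_eq_Max: "max_val \<sigma> vs = Max (insert 0 (sval \<sigma> ` set vs))"
  unfolding max_val_def using Max.set_eq_fold[of 0 "map (sval \<sigma>) vs", symmetric] by simp

lemma sval_le_max_val: "v \<in> set vs \<Longrightarrow> sval \<sigma> v \<le> max_val \<sigma> vs"
  unfolding max_val_eq_Max by simp

lemma max_val_attained:
  assumes "0 < max_val \<sigma> vs"
  obtains v where "v \<in> set vs" and "max_val \<sigma> vs = sval \<sigma> v"
proof -
  have "max_val \<sigma> vs \<in> insert 0 (sval \<sigma> ` set vs)"
    unfolding max_val_eq_Max by (rule Max_in) auto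
  with assms that show thesis by auto
qed

fun guard :: "'x sublevel \<Rightarrow> 'x set" where
  "guard (SubA E x S) = E"
| "guard (SubB E S) = E"

fun offset :: "'x sublevel \<Rightarrow> nat" where
  "offset (SubA E x S) = S"
| "offset (SubB E S) = S"

lemma guard_nonzero_if_sval_pos: "0 < sval \<sigma> v \<Longrightarrow> y \<in> guard v \<Longrightarrow> 0 < \<sigma> y"
  by (cases v) (auto split: if_splits)

lemma le_L_SubA_SubA: "F \<subseteq> E \<Longrightarrow> S \<le> T \<Longrightarrow> le_L (SubA E x S) (SubA F x T)"
  unfolding le_L_def by (auto simp: subset_iff) force+

lemma le_L_SubB_SubA:
  fixes E :: "'x set"
  assumes "F \<subseteq> E" and "y \<in> F" and "S \<le> Suc T"
  shows "le_L (SubB E S) (SubA F y T)"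
  unfolding le_L_def
proof
  fix \<tau> :: "'x \<Rightarrow> nat"
  show "sval \<tau> (SubB E S) \<le> sval \<tau> (SubA F y T)"
  proof (cases "\<exists>z\<in>E. \<tau> z = 0")
    case False
    with assms(1) have "\<not> (\<exists>z\<in>F. \<tau> z = 0)" by blast
    moreover from False assms(1,2) have "0 < \<tau> y" by auto
    ultimately show ?thesis using False assms(3) by auto
  qed simp
qed

lemma le_L_SubB_SubB: "F \<subseteq> E \<Longrightarrow> S \<le> T \<Longrightarrow> le_L (SubB E S) (SubB F T)"
  unfolding le_L_def by (auto simp: subset_iff) force+

lemma test_valuation_SubA:
  fixes x :: 'x and E :: "'x set" and N :: nat
  defines "\<sigma> \<equiv> \<lambda>z. if z = x then N else if z \<in> E then 1 else 0"
  assumes x_in_E: "x \<in> E" and N_large: "Suc (offset v) < N"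
    and reaches: "sval \<sigma> (SubA E x S) \<le> sval \<sigma> v"
  shows "le_L (SubA E x S) v"
proof -
  have val_u: "sval \<sigma> (SubA E x S) = N + S"
    using x_in_E N_large by (auto simp: \<sigma>_def)
  then have "0 < sval \<sigma> v" using N_large reaches by simp
  have guard_v: "guard v \<subseteq> E"
  proof
    fix y assume "y \<in> guard v"
    with \<open>0 < sval \<sigma> v\<close> have "0 < \<sigma> y" by (rule guard_nonzero_if_sval_pos)
    with x_in_E show "y \<in> E" by (simp add: \<sigma>_def split: if_splits)
  qed
  show ?thesis
  proof (cases v)
    case (SubA F y T)
    with \<open>0 < sval \<sigma> v\<close> have val_v: "sval \<sigma> v = \<sigma> y + T" by (auto split: if_splits)
    have "y = x"
    proof (rule ccontr)
      assume "y \<noteq> x"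
      then have "\<sigma> y \<le> 1" by (simp add: \<sigma>_def)
      with val_u val_v N_large reaches SubA show False by simp
    qed
    with val_u val_v reaches have "S \<le> T" by (simp add: \<sigma>_def)
    with guard_v SubA \<open>y = x\<close> show ?thesis by (simp add: le_L_SubA_SubA)
  next
    case (SubB F T)
    with val_u N_large reaches show ?thesis by (simp split: if_splits)
  qed
qed

lemma test_valuation_SubB:
  fixes E :: "'x set"
  defines "\<sigma> \<equiv> \<lambda>z. if z \<in> E then 1 else 0"
  assumes S_pos: "0 < S" and v_in_Ls: "in_Ls v"
    and reaches: "sval \<sigma> (SubB E S) \<le> sval \<sigma> v"
  shows "le_L (SubB E S) v"
proof -
  have val_u: "sval \<sigma> (SubB E S) = S" by (simp add: \<sigma>_def)
  then have "0 < sval \<sigma> v" using S_pos reaches by simp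
  have guard_v: "guard v \<subseteq> E"
  proof
    fix y assume "y \<in> guard v"
    with \<open>0 < sval \<sigma> v\<close> have "0 < \<sigma> y" by (rule guard_nonzero_if_sval_pos)
    then show "y \<in> E" by (simp add: \<sigma>_def split: if_splits)
  qed
  show ?thesis
  proof (cases v)
    case (SubA F y T)
    with guard_v v_in_Ls have "y \<in> F" "\<sigma> y = 1" by (auto simp: \<sigma>_def)
    moreover from SubA \<open>0 < sval \<sigma> v\<close> have "sval \<sigma> v = \<sigma> y + T" by (auto split: if_splits)
    ultimately show ?thesis
      using val_u reaches guard_v SubA by (simp add: le_L_SubB_SubA)
  next
    case (SubB F T)
    with \<open>0 < sval \<sigma> v\<close> have "sval \<sigma> v = T" by (auto split: if_splits)
    with val_u reaches guard_v SubB show ?thesis by (simp add: le_L_SubB_SubB)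
  qed
qed

lemma exists_test_valuation:
  assumes "finite V" and "in_Ls u" and "\<forall>v\<in>V. in_Ls v"
  obtains \<sigma> where "0 < sval \<sigma> u" and "\<And>v. v \<in> V \<Longrightarrow> sval \<sigma> u \<le> sval \<sigma> v \<Longrightarrow> le_L u v"
proof (cases u)
  case (SubA E x S)
  define N where "N = Max (insert 0 (offset ` V)) + 2"
  define \<sigma> where "\<sigma> = (\<lambda>z. if z = x then N else if z \<in> E then 1 else 0)"
  have N_large: "Suc (offset v) < N" if "v \<in> V" for v
    using assms(1) that by (simp add: N_def less_Suc_eq_le)
  show thesis
  proof (rule that)
    show "0 < sval \<sigma> u" using SubA assms(2) by (auto simp: \<sigma>_def N_def)
  next
    fix v assume "v \<in> V" and "sval \<sigma> u \<le> sval \<sigma> v"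
    with SubA assms(2) N_large show "le_L u v"
      unfolding \<sigma>_def by (auto intro: test_valuation_SubA[where N = N])
  qed
next
  case (SubB E S)
  define \<sigma> where "\<sigma> = (\<lambda>z. if z \<in> E then 1 else (0::nat))"
  show thesis
  proof (rule that)
    show "0 < sval \<sigma> u" using SubB assms(2) by (simp add: \<sigma>_def)
  next
    fix v assume "v \<in> V" and "sval \<sigma> u \<le> sval \<sigma> v"
    with SubB assms(2,3) show "le_L u v"
      unfolding \<sigma>_def by (auto intro: test_valuation_SubB)
  qed
qed

theorem lemma36:
  fixes u :: "'x::countable sublevel" and vs :: "'x sublevel list"
  assumes "in_Ls u" and "\<forall>v\<in>set vs. in_Ls v"
  shows "le_L_max u vs \<longleftrightarrow> (\<exists>v\<in>set vs. le_L u v)"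
proof
  assume "\<exists>v\<in>set vs. le_L u v"
  then show "le_L_max u vs"
    unfolding le_L_max_def le_L_def using sval_le_max_val le_trans by blast
next
  assume "le_L_max u vs"
  obtain \<sigma> where pos: "0 < sval \<sigma> u"
    and test: "\<And>v. v \<in> set vs \<Longrightarrow> sval \<sigma> u \<le> sval \<sigma> v \<Longrightarrow> le_L u v"
    using exists_test_valuation[OF finite_set assms] by blast
  have "sval \<sigma> u \<le> max_val \<sigma> vs"
    using \<open>le_L_max u vs\<close> unfolding le_L_max_def by blast
  with pos obtain v where "v \<in> set vs" and "max_val \<sigma> vs = sval \<sigma> v"
    using max_val_attained by (metis less_le_trans)
  with test \<open>sval \<sigma> u \<le> max_val \<sigma> vs\<close> show "\<exists>v\<in>set vs. le_L u v" by metis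
qed

end
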